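(* For $k\ge4$ and $n>k(k-1)$, $$\frac{n^k-k^3n^{k-2}}{k^k-k}\le g_k(n)\le\frac{n^k-n}{k^k-k}.$$
   Context: The function $g_k$ is defined by: $g_k(s)=0$ for $0\le s<k$, and for $s\ge k\ge 3$, $g_k(s)=\max\left(\sum_{i=1}^k g_k(s_i)+\prod_{i=1}^k s_i\right)$, the maximum over all partitions $s_1+\dots+s_k=s$ into nonnegative integers with $s_i<s$ for each $i$. *)

theory Defs
  imports Complex_Main
begin

definition parts :: "nat \<Rightarrow> nat \<Rightarrow> nat list set" where
  "parts k s = {xs. length xs = k \<and> sum_list xs = s \<and> (\<forall>x\<in>set xs. x < s)}"

declare image_cong [fundef_cong]

function g :: "nat \<Rightarrow> nat \<Rightarrow> nat" where
  "g k s = (if s < k then 0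
            else Max ((\<lambda>xs. sum_list (map (g k) xs) + prod_list xs) ` parts k s))"
  by pat_completeness auto
termination
  by (relation "measure snd") (auto simp: parts_def)

declare image_cong [fundef_cong del]

end

theory Submission
  imports Defs "HOL-Analysis.Analysis"
begin

text \<open>
  Upper bound: for nonnegative reals x_0, ..., x_(k-1),
  sum x_i^k + (k^k - k) prod x_i <= (sum x_i)^k.
  Expand the right-hand side over all k^k words over the alphabet {0..<k}. The k constant words
  give sum x_i^k. The cyclic shifts of the letters, i |-> (i + c) mod k for c < k, permute the
  non-constant words, and the k monomials of the shifts of one word multiply to (prod x_i)^k;
  by AM-GM they sum to at least k prod x_i, so the non-constant words contribute at least
  (k^k - k) prod x_i. Applied to an optimal partition this gives the upper bound by strong
  induction on n.

  Lower bound: write n = k q + r with r < k and take the balanced partition into r parts q + 1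
  and k - r parts q. For f(t) = t^k - k^3 t^(k-2), strong induction reduces the claim to
  f(n) <= r f(q+1) + (k-r) f(q) + (k^k - k) (q+1)^r q^(k-r). With x = n/k, convexity of t^k gives
  k x^k <= r (q+1)^k + (k-r) q^k; the bounds ln(1+t) >= t - t^2 and ln(1-t) >= -t - 2t^2 give
  (q+1)^r q^(k-r) >= x^k - (k/2) x^(k-2); and the resulting error terms are absorbed by the
  slack k^3 n^(k-2) built into f.

  Neither bound needs the hypothesis n > k(k-1) of the theorem.
\<close>

section \<open>A power-sum inequality\<close>

lemma power_sum_eq_sum_PiE:
  fixes x :: "'a \<Rightarrow> 'b::comm_semiring_1"
  assumes "finite A"
  shows "(\<Sum>i\<in>A. x i) ^ n = (\<Sum>w\<in>{..<n} \<rightarrow>\<^sub>E A. \<Prod>j<n. x (w j))"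
proof -
  have "(\<Sum>i\<in>A. x i) ^ n = (\<Prod>j<n. \<Sum>i\<in>A. x i)" by simp
  also have "\<dots> = (\<Sum>w\<in>{..<n} \<rightarrow>\<^sub>E A. \<Prod>j<n. x (w j))"
    by (rule prod_sum_PiE) (use assms in auto)
  finally show ?thesis .
qed

lemma add_mod_eq_add_mod_iff: "(a + c) mod k = (b + c) mod k \<longleftrightarrow> a mod k = b mod (k::nat)"
  by (simp add: nat_mod_eq_iff)

lemma bij_betw_endo_if_inj_on:
  assumes "finite A" "f ` A \<subseteq> A" "inj_on f A"
  shows "bij_betw f A A"
  using assms endo_inj_surj unfolding bij_betw_def by blast

lemma bij_betw_add_mod: "bij_betw (\<lambda>i. (i + c) mod k) {..<k} {..<k::nat}"
proof -
  have "inj_on (\<lambda>i. (i + c) mod k) {..<k}"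
    by (auto simp: inj_on_def add_mod_eq_add_mod_iff)
  moreover have "(\<lambda>i. (i + c) mod k) ` {..<k} \<subseteq> {..<k}"
    by auto
  ultimately show ?thesis
    by (intro bij_betw_endo_if_inj_on) auto
qed

lemma prod_add_mod: "(\<Prod>i<k. f ((i + c) mod k)) = (\<Prod>i<k::nat. f i)"
  using prod.reindex_bij_betw[OF bij_betw_add_mod] .

lemma card_mult_le_sum_if_prod_eq_power:
  fixes f :: "'a \<Rightarrow> real"
    and p :: real
  assumes "finite S" "S \<noteq> {}" "\<And>i. i \<in> S \<Longrightarrow> f i \<ge> 0"
    and "p \<ge> 0" "(\<Prod>i\<in>S. f i) = p ^ card S"
  shows "card S * p \<le> (\<Sum>i\<in>S. f i)"
proof -
  have S: "card S > 0"
    using assms(1,2) by (simp add: card_gt_0_iff)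
  have "p = (p ^ card S) powr (1 / card S)"
  proof (cases "p = 0")
    case True
    then show ?thesis using S by simp
  next
    case False
    then have "p ^ card S = p powr real (card S)"
      using assms(4) by (simp add: powr_realpow)
    then show ?thesis
      using S assms(4) by (simp add: powr_powr)
  qed
  also have "\<dots> \<le> (\<Sum>i\<in>S. f i / card S)"
    using arith_geom_mean[of S f] assms by simp
  also have "\<dots> = (\<Sum>i\<in>S. f i) / card S"
    by (simp add: sum_divide_distrib)
  finally show ?thesis
    using S by (simp add: field_simps)
qed

definition const_words :: "nat \<Rightarrow> (nat \<Rightarrow> nat) set" where
  "const_words k = (\<lambda>i. \<lambda>j\<in>{..<k}. i) ` {..<k}"

definition nonconst_words :: "nat \<Rightarrow> (nat \<Rightarrow> nat) set" where
  "nonconst_words k = ({..<k} \<rightarrow>\<^sub>E {..<k}) - const_words k"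

definition shift_letters :: "nat \<Rightarrow> nat \<Rightarrow> (nat \<Rightarrow> nat) \<Rightarrow> nat \<Rightarrow> nat" where
  "shift_letters k c w = (\<lambda>j\<in>{..<k}. (w j + c) mod k)"

lemma inj_on_const_word: "inj_on (\<lambda>i. \<lambda>j\<in>{..<k}. i) {..<k::nat}"
proof
  fix a b
  assume "a \<in> {..<k}" and "(\<lambda>j\<in>{..<k}. a) = (\<lambda>j\<in>{..<k}. b)"
  then have "(\<lambda>j\<in>{..<k}. a) a = (\<lambda>j\<in>{..<k}. b) a"
    by simp
  with \<open>a \<in> {..<k}\<close> show "a = b"
    by simp
qed

lemma const_words_subset_PiE: "const_words k \<subseteq> {..<k} \<rightarrow>\<^sub>E {..<k}"
  unfolding const_words_def by (rule image_subsetI) (simp add: restrict_PiE_iff)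

lemma card_nonconst_words: "card (nonconst_words k) = k ^ k - k"
proof -
  have "card (const_words k) = k"
    by (simp add: const_words_def card_image inj_on_const_word)
  then show ?thesis
    using card_Diff_subset[OF _ const_words_subset_PiE]
    by (simp add: nonconst_words_def card_PiE finite_subset[OF const_words_subset_PiE] finite_PiE)
qed

lemma sum_const_words:
  "(\<Sum>w\<in>const_words k. \<Prod>j<k. x (w j)) = (\<Sum>i<k. x i ^ k)"
  unfolding const_words_def by (subst sum.reindex[OF inj_on_const_word]) simp

lemma shift_letters_in_PiE: "shift_letters k c w \<in> {..<k} \<rightarrow>\<^sub>E {..<k}"
  unfolding shift_letters_def restrict_PiE_iff
proof
  fix j assume "j \<in> {..<k}"
  then have "0 < k"
    by simp
  then show "(w j + c) mod k \<in> {..<k}"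
    by simp
qed

lemma bij_betw_shift_letters_PiE:
  "bij_betw (shift_letters k c) ({..<k} \<rightarrow>\<^sub>E {..<k}) ({..<k} \<rightarrow>\<^sub>E {..<k})"
proof (rule bij_betw_endo_if_inj_on)
  show "inj_on (shift_letters k c) ({..<k} \<rightarrow>\<^sub>E {..<k})"
  proof
    fix v w
    assume v: "v \<in> {..<k} \<rightarrow>\<^sub>E {..<k}" and w: "w \<in> {..<k} \<rightarrow>\<^sub>E {..<k}"
      and eq: "shift_letters k c v = shift_letters k c w"
    show "v = w"
    proof (rule PiE_ext[OF v w])
      fix j assume j: "j \<in> {..<k}"
      have "(v j + c) mod k = (w j + c) mod k"
        using fun_cong[OF eq, of j] j by (simp add: shift_letters_def)
      moreover have "v j < k" "w j < k"
        using PiE_mem[OF v j] PiE_mem[OF w j] by simp_all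
      ultimately show "v j = w j"
        by (simp add: add_mod_eq_add_mod_iff)
    qed
  qed
  show "shift_letters k c ` ({..<k} \<rightarrow>\<^sub>E {..<k}) \<subseteq> {..<k} \<rightarrow>\<^sub>E {..<k}"
    using shift_letters_in_PiE by blast
qed (simp add: finite_PiE)

lemma bij_betw_shift_letters_const_words:
  "bij_betw (shift_letters k c) (const_words k) (const_words k)"
proof (rule bij_betw_endo_if_inj_on)
  show "finite (const_words k)"
    by (simp add: const_words_def)
  show "inj_on (shift_letters k c) (const_words k)"
    using bij_betw_imp_inj_on[OF bij_betw_shift_letters_PiE] const_words_subset_PiE
    by (rule inj_on_subset)
  show "shift_letters k c ` const_words k \<subseteq> const_words k"
  proof
    fix w assume "w \<in> shift_letters k c ` const_words k"
    then obtain i where i: "i < k" and w: "w = shift_letters k c (\<lambda>j\<in>{..<k}. i)"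
      by (auto simp: const_words_def)
    have "w = (\<lambda>j\<in>{..<k}. (i + c) mod k)"
      unfolding w shift_letters_def by (rule restrict_ext) simp
    moreover have "(i + c) mod k < k"
      using i by simp
    ultimately show "w \<in> const_words k"
      unfolding const_words_def by blast
  qed
qed

lemma bij_betw_shift_letters:
  "bij_betw (shift_letters k c) (nonconst_words k) (nonconst_words k)"
  unfolding nonconst_words_def
  by (intro bij_betw_DiffI bij_betw_shift_letters_PiE bij_betw_shift_letters_const_words
      const_words_subset_PiE)

lemma prod_shift_letters:
  assumes "w \<in> {..<k} \<rightarrow>\<^sub>E {..<k}"
  shows "(\<Prod>c<k. \<Prod>j<k. x (shift_letters k c w j)) = (\<Prod>i<k. x i) ^ k"
proof -
  have "(\<Prod>c<k. \<Prod>j<k. x (shift_letters k c w j)) = (\<Prod>j<k. \<Prod>c<k. x ((c + w j) mod k))"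
    by (subst prod.swap) (simp add: shift_letters_def add.commute)
  also have "\<dots> = (\<Prod>j<k. \<Prod>i<k. x i)"
    by (simp only: prod_add_mod)
  finally show ?thesis by simp
qed

lemma mult_prod_le_sum_shift_letters:
  fixes x :: "nat \<Rightarrow> real"
  assumes k: "k > 0" and x: "\<And>i. i < k \<Longrightarrow> x i \<ge> 0"
    and w: "w \<in> {..<k} \<rightarrow>\<^sub>E {..<k}"
  shows "real k * (\<Prod>i<k. x i) \<le> (\<Sum>c<k. \<Prod>j<k. x (shift_letters k c w j))"
proof -
  have "card {..<k} * (\<Prod>i<k. x i) \<le> (\<Sum>c<k. \<Prod>j<k. x (shift_letters k c w j))"
  proof (rule card_mult_le_sum_if_prod_eq_power)
    show "(\<Prod>j<k. x (shift_letters k c w j)) \<ge> 0" for c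
      using k x by (auto simp: shift_letters_def intro: prod_nonneg)
    show "(\<Prod>c<k. \<Prod>j<k. x (shift_letters k c w j)) = (\<Prod>i<k. x i) ^ card {..<k}"
      using prod_shift_letters[OF w] by simp
    show "(\<Prod>i<k. x i) \<ge> 0"
      by (rule prod_nonneg) (simp add: x)
  qed (use k in auto)
  then show ?thesis
    by simp
qed

lemma sum_powers_plus_prod_le_power_sum:
  fixes x :: "nat \<Rightarrow> real"
  assumes k: "k > 0" and x: "\<And>i. i < k \<Longrightarrow> x i \<ge> 0"
  shows "(\<Sum>i<k. x i ^ k) + (real k ^ k - real k) * (\<Prod>i<k. x i) \<le> (\<Sum>i<k. x i) ^ k"
proof -
  define P where "P = (\<Prod>i<k. x i)"
  define m where "m w = (\<Prod>j<k. x (w j))" for w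
  define NC where "NC = nonconst_words k"
  have NC: "NC \<subseteq> {..<k} \<rightarrow>\<^sub>E {..<k}"
    by (simp add: NC_def nonconst_words_def)
  have "real (k ^ k - k) = real k ^ k - real k"
    using k by (simp add: of_nat_diff self_le_power)
  then have "real k * ((real k ^ k - real k) * P) = (\<Sum>w\<in>NC. real k * P)"
    using card_nonconst_words[of k] by (simp add: NC_def)
  also have "\<dots> \<le> (\<Sum>w\<in>NC. \<Sum>c<k. m (shift_letters k c w))"
    using mult_prod_le_sum_shift_letters[of k x] k x NC by (intro sum_mono) (auto simp: m_def P_def)
  also have "\<dots> = (\<Sum>c<k. \<Sum>w\<in>NC. m (shift_letters k c w))"
    by (rule sum.swap)
  also have "\<dots> = real k * (\<Sum>w\<in>NC. m w)"
    unfolding NC_def by (simp add: sum.reindex_bij_betw[OF bij_betw_shift_letters])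
  finally have "(real k ^ k - real k) * P \<le> (\<Sum>w\<in>NC. m w)"
    using k by simp
  moreover have "(\<Sum>i<k. x i) ^ k = (\<Sum>w\<in>{..<k} \<rightarrow>\<^sub>E {..<k}. m w)"
    unfolding m_def by (rule power_sum_eq_sum_PiE) simp
  moreover have "\<dots> = (\<Sum>w\<in>NC. m w) + (\<Sum>w\<in>const_words k. m w)"
    using sum.subset_diff[OF const_words_subset_PiE, where g = m]
    by (simp add: NC_def nonconst_words_def finite_PiE)
  moreover have "(\<Sum>w\<in>const_words k. m w) = (\<Sum>i<k. x i ^ k)"
    unfolding m_def by (rule sum_const_words)
  ultimately show ?thesis by (simp add: P_def)
qed

text \<open>The defining equation of g is unconditional, so as a simp rule it unfolds every g k s.\<close>
declare g.simps [simp del]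

definition split_value :: "nat \<Rightarrow> nat list \<Rightarrow> nat" where
  "split_value k xs = sum_list (map (g k) xs) + prod_list xs"

lemma finite_parts: "finite (parts k s)"
proof (rule finite_subset)
  show "parts k s \<subseteq> {xs. set xs \<subseteq> {..s} \<and> length xs = k}"
    by (auto simp: parts_def)
  show "finite {xs. set xs \<subseteq> {..s} \<and> length xs = k}"
    by (rule finite_lists_length_eq) simp
qed

lemma g_less: "s < k \<Longrightarrow> g k s = 0"
  by (subst g.simps) simp

lemma g_eq_Max: "k \<le> s \<Longrightarrow> g k s = Max (split_value k ` parts k s)"
  by (subst g.simps) (simp add: split_value_def)

lemma split_value_le_g:
  assumes "k \<le> s" "xs \<in> parts k s"
  shows "split_value k xs \<le> g k s"
  unfolding g_eq_Max[OF assms(1)] by (intro Max_ge finite_imageI finite_parts imageI assms(2))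

lemma of_nat_split_value:
  "length xs = k \<Longrightarrow>
    real (split_value k xs) = (\<Sum>i<k. real (g k (xs ! i))) + (\<Prod>i<k. real (xs ! i))"
  by (simp add: split_value_def sum.list_conv_set_nth prod.list_conv_set_nth atLeast0LessThan)

definition balanced_parts :: "nat \<Rightarrow> nat \<Rightarrow> nat list" where
  "balanced_parts k n = replicate (n mod k) (n div k + 1) @ replicate (k - n mod k) (n div k)"

lemma balanced_parts_in_parts:
  assumes "2 \<le> k" "k \<le> n"
  shows "balanced_parts k n \<in> parts k n"
proof -
  have "n div k \<ge> 1"
    using assms div_le_mono[of k n k] by simp
  moreover have "k * (n div k) + n mod k = n"
    by simp
  moreover have "2 * (n div k) \<le> k * (n div k)"
    using assms by simp
  ultimately have "n div k < n" "0 < n mod k \<Longrightarrow> n div k + 1 < n"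
    by linarith+
  moreover have "n mod k < k"
    using assms by simp
  moreover have "sum_list (balanced_parts k n) = n"
    using \<open>n mod k < k\<close> \<open>k * (n div k) + n mod k = n\<close>
    by (simp add: balanced_parts_def sum_list_replicate algebra_simps diff_mult_distrib)
  ultimately show ?thesis
    by (auto simp: parts_def balanced_parts_def)
qed

lemma g_attained:
  assumes "2 \<le> k" "k \<le> s"
  obtains xs where "xs \<in> parts k s" "g k s = split_value k xs"
proof -
  have "parts k s \<noteq> {}"
    using balanced_parts_in_parts[OF assms] by blast
  then have "g k s \<in> split_value k ` parts k s"
    unfolding g_eq_Max[OF assms(2)] by (simp add: finite_parts)
  then show ?thesis
    using that by blast
qed

lemma g_upper_bound:
  assumes k: "k \<ge> 2"
  shows "(real k ^ k - real k) * real (g k n) \<le> real n ^ k - real n"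
proof (induction n rule: less_induct)
  case (less n)
  show ?case
  proof (cases "n < k")
    case True
    have "real n \<le> real n ^ k"
      using k by (cases "n = 0") (simp_all add: self_le_power)
    then show ?thesis
      using True by (simp add: g_less)
  next
    case False
    then have "k \<le> n"
      by simp
    then obtain xs where xs: "xs \<in> parts k n" and gxs: "g k n = split_value k xs"
      by (rule g_attained[OF k])
    define K where "K = real k ^ k - real k"
    define y where "y i = real (xs ! i)" for i
    have len: "length xs = k" and part_less: "\<And>i. i < k \<Longrightarrow> xs ! i < n"
      using xs by (auto simp: parts_def)
    have "sum_list xs = n"
      using xs by (simp add: parts_def)
    then have sum_y: "(\<Sum>i<k. y i) = real n"
      by (simp add: y_def sum.list_conv_set_nth len atLeast0LessThan flip: of_nat_sum)
    have "real (g k n) = (\<Sum>i<k. real (g k (xs ! i))) + (\<Prod>i<k. y i)"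
      unfolding gxs y_def by (rule of_nat_split_value[OF len])
    then have "K * real (g k n) = (\<Sum>i<k. K * real (g k (xs ! i))) + K * (\<Prod>i<k. y i)"
      by (simp only: distrib_left sum_distrib_left)
    also have "\<dots> \<le> (\<Sum>i<k. y i ^ k - y i) + K * (\<Prod>i<k. y i)"
      using less.IH part_less by (intro add_right_mono sum_mono) (simp add: K_def y_def)
    also have "\<dots> = (\<Sum>i<k. y i ^ k) + K * (\<Prod>i<k. y i) - real n"
      by (simp add: sum_subtractf sum_y)
    also have "\<dots> \<le> real n ^ k - real n"
      using sum_powers_plus_prod_le_power_sum[of k y] k sum_y by (simp add: K_def y_def)
    finally show ?thesis
      by (simp add: K_def)
  qed
qed

section \<open>The lower estimate\<close>

lemma power_ge_tangent:
  fixes x y :: real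
  assumes "x > 0" "y \<ge> 0"
  shows "x ^ k + real k * x ^ (k - 1) * (y - x) \<le> y ^ k"
proof -
  define t where "t = (y - x) / x"
  have "x * (1 + t) = y" "x * t = y - x"
    using assms by (simp_all add: t_def field_simps)
  have "x ^ k * (1 + real k * t) = x ^ k + real k * x ^ (k - 1) * (x * t)"
    by (cases k) (simp_all add: algebra_simps)
  then have "x ^ k + real k * x ^ (k - 1) * (y - x) = x ^ k * (1 + real k * t)"
    by (simp add: \<open>x * t = y - x\<close>)
  also have "\<dots> \<le> x ^ k * (1 + t) ^ k"
    using assms by (intro mult_left_mono Bernoulli_inequality) (simp_all add: t_def field_simps)
  also have "\<dots> = y ^ k"
    using \<open>x * (1 + t) = y\<close> by (simp flip: power_mult_distrib)
  finally show ?thesis .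
qed

lemma weighted_mean_power_le:
  fixes u v :: real
  assumes "u > 0" "v > 0" "r + m > 0"
  shows "(real r + real m) * ((real r * u + real m * v) / (real r + real m)) ^ k
    \<le> real r * u ^ k + real m * v ^ k"
proof -
  define x where "x = (real r * u + real m * v) / (real r + real m)"
  have rm: "real r + real m > 0"
    using assms(3) by (metis of_nat_0_less_iff of_nat_add)
  have "real r * u + real m * v > 0"
  proof (cases "r = 0")
    case True
    then show ?thesis
      using assms(2,3) by simp
  next
    case False
    then show ?thesis
      using assms(1,2) by (simp add: add_pos_nonneg)
  qed
  then have "x > 0"
    using rm by (simp add: x_def)
  have balance: "real r * (u - x) + real m * (v - x) = 0"
    using rm by (simp add: x_def field_simps)
  have "(real r + real m) * x ^ k
      = (real r + real m) * x ^ k + k * x ^ (k - 1) * (real r * (u - x) + real m * (v - x))"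
    by (simp add: balance)
  also have "\<dots>
      = real r * (x ^ k + k * x ^ (k - 1) * (u - x)) + real m * (x ^ k + k * x ^ (k - 1) * (v - x))"
    by (simp add: algebra_simps)
  also have "\<dots> \<le> real r * u ^ k + real m * v ^ k"
    using \<open>x > 0\<close> assms power_ge_tangent
    by (intro add_mono mult_left_mono) (simp_all add: less_imp_le)
  finally show ?thesis
    by (simp add: x_def)
qed

lemma exp_mult_le_power:
  fixes a c :: real
  assumes "0 < 1 + a" "c \<le> ln (1 + a)"
  shows "exp (real r * c) \<le> (1 + a) ^ r"
proof -
  have "exp (real r * c) \<le> exp (real r * ln (1 + a))"
    using assms by (simp add: mult_left_mono)
  also have "\<dots> = (1 + a) ^ r"
    using assms by (simp add: exp_of_nat_mult)
  finally show ?thesis .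
qed

lemma one_minus_le_power_product:
  fixes a b :: real
  assumes "0 \<le> a" "a \<le> 1" "0 \<le> b" "b \<le> 1/2" "real r * a = real m * b"
  shows "1 - (real r * a\<^sup>2 + 2 * real m * b\<^sup>2) \<le> (1 + a) ^ r * (1 - b) ^ m"
proof -
  define E where "E = real r * a\<^sup>2 + 2 * real m * b\<^sup>2"
  have "exp (real r * (a - a\<^sup>2)) \<le> (1 + a) ^ r"
    using assms(1,2) ln_one_plus_pos_lower_bound[of a] by (intro exp_mult_le_power) simp_all
  moreover have "exp (real m * (- b - 2 * b\<^sup>2)) \<le> (1 - b) ^ m"
    using assms(3,4) ln_one_minus_pos_lower_bound[of b] exp_mult_le_power[of "- b" "- b - 2 * b\<^sup>2" m]
    by simp
  ultimately have "exp (real r * (a - a\<^sup>2)) * exp (real m * (- b - 2 * b\<^sup>2))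
      \<le> (1 + a) ^ r * (1 - b) ^ m"
    by (rule mult_mono) (use assms(1) in simp_all)
  moreover have "real r * (a - a\<^sup>2) + real m * (- b - 2 * b\<^sup>2) = (real r * a - real m * b) - E"
    by (simp add: E_def algebra_simps)
  then have "exp (real r * (a - a\<^sup>2)) * exp (real m * (- b - 2 * b\<^sup>2)) = exp (- E)"
    using assms(5) by (simp flip: exp_add)
  moreover have "1 - E \<le> exp (- E)"
    using exp_ge_add_one_self[of "- E"] by linarith
  ultimately show ?thesis
    unfolding E_def by linarith
qed

lemma two_mul_mixed_cubic_le:
  fixes r m :: real
  assumes "r \<ge> 0" "m \<ge> 0"
  shows "2 * (r * m\<^sup>2 + 2 * m * r\<^sup>2) \<le> (r + m) ^ 3"
proof -
  have "(r + m) ^ 3 - 2 * (r * m\<^sup>2 + 2 * m * r\<^sup>2) = (r + m) * (r - m)\<^sup>2 + 2 * r * m\<^sup>2"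
    by (simp add: power2_eq_square power3_eq_cube algebra_simps)
  moreover have "(r + m) * (r - m)\<^sup>2 + 2 * r * m\<^sup>2 \<ge> 0"
    using assms by simp
  ultimately show ?thesis
    by linarith
qed

lemma mixed_square_terms_le:
  fixes x :: real
  assumes "x > 0" "k = r + m"
  shows "real r * (real m / (real k * x))\<^sup>2 + 2 * real m * (real r / (real k * x))\<^sup>2
    \<le> real k / (2 * x\<^sup>2)"
proof (cases "k = 0")
  case False
  have "real r * (real m / (real k * x))\<^sup>2 + 2 * real m * (real r / (real k * x))\<^sup>2
      = (real r * (real m)\<^sup>2 + 2 * real m * (real r)\<^sup>2) / (real k * x)\<^sup>2"
    by (simp add: power_divide add_divide_distrib)
  also have "\<dots> \<le> (real k ^ 3 / 2) / (real k * x)\<^sup>2"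
    using two_mul_mixed_cubic_le[of "real r" "real m"] assms(2) by (intro divide_right_mono) simp_all
  also have "\<dots> = real k / (2 * x\<^sup>2)"
    using False assms(1) by (simp add: power2_eq_square power3_eq_cube)
  finally show ?thesis .
qed (use assms in simp)

lemma power_split_le:
  fixes a :: "'a::monoid_mult"
  assumes "m \<le> n"
  shows "a ^ n = a ^ m * a ^ (n - m)"
  by (subst power_add[symmetric]) (simp add: assms)

lemma mean_power_le_mixed_product:
  fixes Q :: real
  assumes k: "k \<ge> 2" and Q: "Q \<ge> 1" and r: "r \<le> k"
  defines "x \<equiv> Q + real r / real k"
  shows "x ^ k - real k / 2 * x ^ (k - 2) \<le> (Q + 1) ^ r * Q ^ (k - r)"
proof -
  define m where "m = k - r"
  define a where "a = real m / (real k * x)"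
  define b where "b = real r / (real k * x)"
  have km: "real k = real r + real m" "k = r + m"
    using r by (simp_all add: m_def)
  have kx: "real k * x = real k * Q + real r"
    using k by (simp add: x_def field_simps)
  have "x \<ge> 1"
    using Q by (simp add: x_def add_increasing2)
  have "real k \<le> real k * Q" "real r \<le> real k"
    using mult_left_mono[OF Q, of "real k"] r by simp_all
  then have "real k \<le> real k * x" "2 * real r \<le> real k * x"
    using kx by linarith+
  moreover have "real m \<le> real k" "0 < real k * x"
    using km(1) k \<open>x \<ge> 1\<close> by simp_all
  ultimately have ab: "0 \<le> a" "a \<le> 1" "0 \<le> b" "b \<le> 1/2" "real r * a = real m * b"
    by (simp_all add: a_def b_def field_simps)
  have "x * a = real m / real k" "x * b = real r / real k"
    using k \<open>x \<ge> 1\<close> by (simp_all add: a_def b_def)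
  moreover have "x * (1 + a) = x + x * a" "x * (1 - b) = x - x * b"
    by (simp_all add: algebra_simps)
  moreover have "real r / real k + real m / real k = 1"
    using km(1) k by (simp flip: add_divide_distrib)
  moreover have "x = Q + real r / real k"
    by (simp add: x_def)
  ultimately have xa: "x * (1 + a) = Q + 1" and xb: "x * (1 - b) = Q"
    by linarith+
  have E: "real r * a\<^sup>2 + 2 * real m * b\<^sup>2 \<le> real k / (2 * x\<^sup>2)"
    unfolding a_def b_def using \<open>x \<ge> 1\<close> km(2) by (intro mixed_square_terms_le) simp_all
  have "x ^ k - real k / 2 * x ^ (k - 2) = x ^ k * (1 - real k / (2 * x\<^sup>2))"
    using \<open>x \<ge> 1\<close> power_split_le[OF k, of x] by (simp add: field_simps power2_eq_square)
  also have "\<dots> \<le> x ^ k * (1 - (real r * a\<^sup>2 + 2 * real m * b\<^sup>2))"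
    using E \<open>x \<ge> 1\<close> by (intro mult_left_mono) auto
  also have "\<dots> \<le> x ^ k * ((1 + a) ^ r * (1 - b) ^ m)"
    using one_minus_le_power_product[OF ab] \<open>x \<ge> 1\<close> by (intro mult_left_mono) auto
  also have "\<dots> = (x * (1 + a)) ^ r * (x * (1 - b)) ^ m"
    by (simp add: km(2) power_add power_mult_distrib)
  finally show ?thesis
    by (simp add: xa xb m_def)
qed

lemma two_mul_power_le_power:
  fixes Q :: real
  assumes k: "k \<ge> 4" and Q: "Q \<ge> 1"
  shows "2 * (Q + 1) ^ (k - 3) \<le> (real k * Q + real r) ^ (k - 3)"
proof -
  have "(2::real) ^ 1 \<le> 2 ^ (k - 3)"
    using k by (intro power_increasing) auto
  then have "2 * (Q + 1) ^ (k - 3) \<le> 2 ^ (k - 3) * (Q + 1) ^ (k - 3)"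
    using Q by (intro mult_right_mono) simp_all
  also have "\<dots> = (2 * (Q + 1)) ^ (k - 3)"
    by (rule power_mult_distrib[symmetric])
  also have "\<dots> \<le> (real k * Q + real r) ^ (k - 3)"
  proof (rule power_mono)
    have "2 * (Q + 1) \<le> 4 * Q"
      using Q by simp
    also have "\<dots> \<le> real k * Q"
      using k Q by (intro mult_right_mono) simp_all
    finally show "2 * (Q + 1) \<le> real k * Q + real r"
      by simp
  qed (use Q in simp)
  finally show ?thesis .
qed

lemma two_mul_weighted_powers_le:
  fixes Q :: real
  assumes k: "k \<ge> 4" and Q: "Q \<ge> 1" and r: "r \<le> k"
  shows "2 * (real r * (Q + 1) ^ (k - 2) + real (k - r) * Q ^ (k - 2))
    \<le> (real k * Q + real r) ^ (k - 2)"
proof -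
  define n where "n = real k * Q + real r"
  have k2: "k - 2 = Suc (k - 3)"
    using k by simp
  have "real r * (Q + 1) ^ (k - 2) + real (k - r) * Q ^ (k - 2)
      \<le> real r * ((Q + 1) ^ (k - 3) * (Q + 1)) + real (k - r) * ((Q + 1) ^ (k - 3) * Q)"
    unfolding k2 power_Suc2 using Q
    by (intro add_mono mult_left_mono mult_right_mono power_mono) auto
  also have "\<dots> = (Q + 1) ^ (k - 3) * n"
    using r by (simp add: n_def of_nat_diff algebra_simps)
  finally have "2 * (real r * (Q + 1) ^ (k - 2) + real (k - r) * Q ^ (k - 2))
      \<le> 2 * (Q + 1) ^ (k - 3) * n"
    by simp
  also have "\<dots> \<le> n ^ (k - 3) * n"
    using two_mul_power_le_power[OF k Q, of r] Q by (intro mult_right_mono) (simp_all add: n_def)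
  also have "\<dots> = n ^ (k - 2)"
    by (simp add: k2 power_Suc2)
  finally show ?thesis
    by (simp add: n_def)
qed

lemma weight_mult_power_le:
  fixes x :: real
  assumes "k \<ge> 2" "x \<ge> 0"
  shows "(real k ^ k - real k) * (real k * x ^ (k - 2)) \<le> real k ^ 3 * (real k * x) ^ (k - 2)"
proof -
  have "(real k ^ k - real k) * (real k * x ^ (k - 2)) \<le> real k ^ k * (real k * x ^ (k - 2))"
    using assms by (intro mult_right_mono) simp_all
  also have "\<dots> = real k ^ 3 * (real k * x) ^ (k - 2)"
    using power_split_le[OF assms(1), of "real k"]
    by (simp add: power_mult_distrib power2_eq_square power3_eq_cube)
  finally show ?thesis .
qed

definition lower_estimate :: "nat \<Rightarrow> real \<Rightarrow> real" where
  "lower_estimate k t = t ^ k - real k ^ 3 * t ^ (k - 2)"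

lemma lower_estimate_split:
  fixes Q :: real
  assumes k: "k \<ge> 4" and Q: "Q \<ge> 1" and r: "r \<le> k"
  shows "lower_estimate k (real k * Q + real r)
    \<le> real r * lower_estimate k (Q + 1) + real (k - r) * lower_estimate k Q
      + (real k ^ k - real k) * ((Q + 1) ^ r * Q ^ (k - r))"
proof -
  define x where "x = Q + real r / real k"
  define n where "n = real k * Q + real r"
  define K where "K = real k ^ k - real k"
  define M where "M = (Q + 1) ^ r * Q ^ (k - r)"
  define E where "E = real r * (Q + 1) ^ (k - 2) + real (k - r) * Q ^ (k - 2)"
  have n: "n = real k * x"
    using k by (simp add: n_def x_def field_simps)
  have "x > 0"
    using Q by (simp add: x_def add_pos_nonneg)
  have "K \<ge> 0"
    using k by (simp add: K_def self_le_power)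
  have convex: "real k * x ^ k \<le> real r * (Q + 1) ^ k + real (k - r) * Q ^ k"
    using weighted_mean_power_le[of "Q + 1" Q r "k - r" k] Q r k
    by (simp add: x_def of_nat_diff field_simps)
  have "K * (x ^ k - real k / 2 * x ^ (k - 2)) \<le> K * M"
    using mean_power_le_mixed_product[of k Q r] \<open>K \<ge> 0\<close> k Q r
    by (intro mult_left_mono) (simp_all add: x_def M_def)
  then have mixed: "K * x ^ k \<le> K * M + K * (real k / 2 * x ^ (k - 2))"
    by (simp add: right_diff_distrib)
  have "K * (real k * x ^ (k - 2)) \<le> real k ^ 3 * n ^ (k - 2)"
    unfolding K_def n using k \<open>x > 0\<close> by (intro weight_mult_power_le) simp_all
  then have error: "K * (real k / 2 * x ^ (k - 2)) \<le> real k ^ 3 * n ^ (k - 2) / 2"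
    by simp
  have "2 * E \<le> n ^ (k - 2)"
    unfolding E_def n_def by (rule two_mul_weighted_powers_le[OF k Q r])
  then have slack: "real k ^ 3 * E \<le> real k ^ 3 * n ^ (k - 2) / 2"
    using mult_left_mono[of "2 * E" "n ^ (k - 2)" "real k ^ 3"] by simp
  have "lower_estimate k n = K * x ^ k + real k * x ^ k - real k ^ 3 * n ^ (k - 2)"
    by (simp add: lower_estimate_def n K_def power_mult_distrib algebra_simps)
  also have "\<dots> \<le> K * M + (real r * (Q + 1) ^ k + real (k - r) * Q ^ k) - real k ^ 3 * E"
    using convex mixed error slack by linarith
  also have "\<dots> = real r * lower_estimate k (Q + 1) + real (k - r) * lower_estimate k Q + K * M"
    by (simp add: lower_estimate_def E_def algebra_simps)
  finally show ?thesis
    by (simp add: n_def K_def M_def)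
qed

lemma lower_estimate_nonpos:
  assumes "k \<ge> 2" "0 \<le> t" "t \<le> real k"
  shows "lower_estimate k t \<le> 0"
proof -
  have "t ^ 2 \<le> real k ^ 2"
    using assms by (intro power_mono) simp_all
  also have "\<dots> \<le> real k ^ 3"
    using assms(1) by (intro power_increasing) simp_all
  finally have "t ^ 2 * t ^ (k - 2) \<le> real k ^ 3 * t ^ (k - 2)"
    using assms(2) by (intro mult_right_mono) simp_all
  moreover have "t ^ k = t ^ 2 * t ^ (k - 2)"
    using assms(1) by (rule power_split_le)
  ultimately show ?thesis
    by (simp add: lower_estimate_def)
qed

lemma of_nat_split_value_balanced_parts:
  "real (split_value k (balanced_parts k n))
    = real (n mod k) * real (g k (n div k + 1)) + real (k - n mod k) * real (g k (n div k))
      + (real (n div k) + 1) ^ (n mod k) * real (n div k) ^ (k - n mod k)"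
  by (simp add: split_value_def balanced_parts_def sum_list_replicate add.commute)

lemma g_lower_bound:
  assumes k: "k \<ge> 4"
  shows "lower_estimate k (real n) \<le> (real k ^ k - real k) * real (g k n)"
proof (induction n rule: less_induct)
  case (less n)
  define K where "K = real k ^ k - real k"
  have "K \<ge> 0"
    using k by (simp add: K_def self_le_power)
  show ?case
  proof (cases "n < k")
    case True
    then have "lower_estimate k (real n) \<le> 0"
      using k by (intro lower_estimate_nonpos) simp_all
    then show ?thesis
      using True by (simp add: g_less)
  next
    case False
    define q r where "q = n div k" and "r = n mod k"
    have n: "n = k * q + r"
      by (simp add: q_def r_def)
    have "r < k"
      using k by (simp add: r_def)
    have "q \<ge> 1"
      using False k div_le_mono[of k n k] by (simp add: q_def)
    moreover have "4 * q \<le> k * q"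
      using k by simp
    ultimately have "q < n" and q1: "0 < r \<Longrightarrow> q + 1 < n"
      using n by linarith+
    have IH_q: "lower_estimate k (real q) \<le> K * real (g k q)"
      using less.IH[OF \<open>q < n\<close>] by (simp add: K_def)
    have IH_q1: "real r * lower_estimate k (real q + 1) \<le> real r * (K * real (g k (q + 1)))"
    proof (cases "r = 0")
      case False
      then have "q + 1 < n"
        using q1 by simp
      then have "lower_estimate k (real (q + 1)) \<le> K * real (g k (q + 1))"
        unfolding K_def by (rule less.IH)
      then have "lower_estimate k (real q + 1) \<le> K * real (g k (q + 1))"
        by (simp only: of_nat_add of_nat_1)
      then show ?thesis
        by (rule mult_left_mono) simp
    qed simp
    have "lower_estimate k (real n)
        \<le> real r * lower_estimate k (real q + 1) + real (k - r) * lower_estimate k (real q)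
          + K * ((real q + 1) ^ r * real q ^ (k - r))"
      using lower_estimate_split[OF k, of "real q" r] \<open>q \<ge> 1\<close> \<open>r < k\<close>
      by (simp add: n K_def)
    also have "\<dots> \<le> real r * (K * real (g k (q + 1))) + real (k - r) * (K * real (g k q))
          + K * ((real q + 1) ^ r * real q ^ (k - r))"
      using IH_q1 mult_left_mono[OF IH_q, of "real (k - r)"] by simp
    also have "\<dots> = K * real (split_value k (balanced_parts k n))"
      by (simp add: of_nat_split_value_balanced_parts q_def r_def algebra_simps)
    also have "\<dots> \<le> K * real (g k n)"
      using split_value_le_g[OF _ balanced_parts_in_parts] False k \<open>K \<ge> 0\<close>
      by (intro mult_left_mono) simp_all
    finally show ?thesis
      by (simp add: K_def)
  qed
qed

theorem lemma4p6:
  fixes k n :: nat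
  assumes "k \<ge> 4" and "n > k * (k - 1)"
  shows "(real n ^ k - real k ^ 3 * real n ^ (k - 2)) / (real k ^ k - real k) \<le> real (g k n)
       \<and> real (g k n) \<le> (real n ^ k - real n) / (real k ^ k - real k)"
proof -
  have "real k ^ 1 < real k ^ k"
    using assms(1) by (intro power_strict_increasing) auto
  then have "real k ^ k - real k > 0"
    by simp
  moreover have "real n ^ k - real k ^ 3 * real n ^ (k - 2) \<le> (real k ^ k - real k) * real (g k n)"
    using g_lower_bound[OF assms(1)] by (simp add: lower_estimate_def)
  moreover have "(real k ^ k - real k) * real (g k n) \<le> real n ^ k - real n"
    using g_upper_bound assms(1) by simp
  ultimately show ?thesis
    by (simp add: pos_divide_le_eq pos_le_divide_eq mult.commute)
qed

end
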